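(* Let $f(z)=z+\sum_{k=2}^{\infty}a_kz^k$ be analytic in $\mathbb{D}=\{z:|z|<1\}$ with $zf'(z)-f(z)=\frac12 z^2\phi(z)$ for all $z\in\mathbb{D}$, where $\phi$ is analytic in $\mathbb{D}$ and $|\phi(z)|\le1$. Let $r_{\mathcal K}$ denote the positive root (in $(0,1)$) of \[(1-r)^2\ln(1-r)+2-7r+4r^2=0.\] Then for every $n\ge2$ the partial sum $s_n(z;f)=z+\sum_{k=2}^n a_kz^k$ is convex in the disk $|z|<r_{\mathcal K}$.
   Context: A function analytic in a disk is convex there if it maps the disk conformally onto a convex domain; equivalently, for normalized $g$ with $g'\neq0$, $\mathrm{Re}(1+zg''(z)/g'(z))>0$ in the disk. *)

theory Defs
  imports "HOL-Complex_Analysis.Complex_Analysis"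
begin

definition convex_in_disk :: "(complex \<Rightarrow> complex) \<Rightarrow> real \<Rightarrow> bool" where
  "convex_in_disk g r \<longleftrightarrow>
     g holomorphic_on ball 0 r \<and> inj_on g (ball 0 r) \<and> convex (g ` ball 0 r)"

definition partial_sum :: "(nat \<Rightarrow> complex) \<Rightarrow> nat \<Rightarrow> complex \<Rightarrow> complex" where
  "partial_sum a n z = z + (\<Sum>k=2..n. a k * z ^ k)"

end

(* The function psi = z f' - f = sum (k - 1) a_k z^k satisfies |psi(z)| <= |z|^2/2, so Cauchy's
   estimate gives |a_k| <= 1/(2(k - 1)) for k >= 2.  The equation defining r_K says precisely that
   sum_{k>=2} k^2/(2(k - 1)) r_K^(k-1) = 1; hence for g = s_n and 0 < rho < r_K we get
   sum_{k=2..n} k^2 |a_k| rho^(k-1) < 1.  This makes the Taylor remainder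
   g(z) - g(zeta) - g'(zeta)(z - zeta) small against |z - zeta|^2 whenever |z| <= |zeta| = rho,
   so Re ((g(z) - g(zeta)) / (zeta g'(zeta))) < 0: through every boundary point g(zeta) of
   g(|z| < rho) passes a line leaving the whole image strictly on one side.  The same inequality
   forces injectivity, and an open set having such a line at each boundary point is convex, since
   a segment leaving it would have to cross the boundary.  Letting rho increase to r_K finishes. *)
theory Submission
  imports Defs
begin

lemma has_fps_expansion_if_sums_on_ball:
  fixes f :: "complex \<Rightarrow> complex"
  assumes "0 < R" and series: "\<And>z. z \<in> ball 0 R \<Longrightarrow> (\<lambda>k. a k * z ^ k) sums f z"
  shows "f has_fps_expansion Abs_fps a"
proof (rule has_fps_expansionI)
  have "eventually (\<lambda>z. z \<in> ball 0 R) (nhds (0::complex))"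
    using \<open>0 < R\<close> by (intro eventually_nhds_in_open) auto
  then show "eventually (\<lambda>z. (\<lambda>k. fps_nth (Abs_fps a) k * z ^ k) sums f z) (nhds 0)"
    by (rule eventually_mono) (simp add: series)
qed

lemma norm_fps_nth_le_if_norm_le_power:
  fixes g :: "complex \<Rightarrow> complex"
  assumes hol: "g holomorphic_on ball 0 1" and G: "g has_fps_expansion G"
    and bound: "\<And>z. z \<in> ball 0 1 \<Longrightarrow> norm (g z) \<le> C * norm z ^ m" and "m \<le> k"
  shows "norm (fps_nth G k) \<le> C"
proof -
  have le_C: "norm (fps_nth G k) * \<rho> ^ (k - m) \<le> C" if \<rho>: "0 < \<rho>" "\<rho> < 1" for \<rho> :: real
  proof -
    have "norm ((deriv ^^ k) g 0) \<le> fact k * (C * \<rho> ^ m) / \<rho> ^ k"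
    proof (rule Cauchy_inequality)
      show "g holomorphic_on ball 0 \<rho>"
        using hol by (rule holomorphic_on_subset) (use \<rho> in auto)
      show "continuous_on (cball 0 \<rho>) g"
        by (rule holomorphic_on_imp_continuous_on, rule holomorphic_on_subset[OF hol]) (use \<rho> in auto)
      show "norm (g z) \<le> C * \<rho> ^ m" if "norm (0 - z) = \<rho>" for z
        using bound[of z] that \<rho> by auto
    qed fact
    then have "norm (fps_nth G k) \<le> C * \<rho> ^ m / \<rho> ^ k"
      unfolding fps_nth_fps_expansion[OF G] norm_divide by (simp add: field_simps)
    also have "\<dots> = C / \<rho> ^ (k - m)"
      using \<rho> \<open>m \<le> k\<close> by (simp add: power_diff)
    finally show ?thesis
      using \<rho> by (simp add: field_simps)
  qed
  have "eventually (\<lambda>\<rho>. norm (fps_nth G k) * \<rho> ^ (k - m) \<le> C) (at_left (1::real))"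
    using eventually_at_left_real[of 0 "1::real"] by (rule eventually_mono) (use le_C in auto)
  moreover have "((\<lambda>\<rho>. norm (fps_nth G k) * \<rho> ^ (k - m)) \<longlongrightarrow> norm (fps_nth G k) * 1 ^ (k - m))
      (at_left 1)"
    by (intro tendsto_intros)
  ultimately show ?thesis
    using tendsto_upperbound by fastforce
qed

lemma coeff_bound_if_norm_z_deriv_minus_le:
  fixes f :: "complex \<Rightarrow> complex"
  assumes series: "\<And>z. z \<in> ball 0 1 \<Longrightarrow> (\<lambda>k. a k * z ^ k) sums f z"
    and hol: "f holomorphic_on ball 0 1"
    and bound: "\<And>z. z \<in> ball 0 1 \<Longrightarrow> norm (z * deriv f z - f z) \<le> C * norm z ^ 2"
    and "2 \<le> k"
  shows "(real k - 1) * norm (a k) \<le> C"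
proof -
  define \<Psi> where "\<Psi> = fps_X * fps_deriv (Abs_fps a) - Abs_fps a"
  have F: "f has_fps_expansion Abs_fps a"
    by (rule has_fps_expansion_if_sums_on_ball[OF _ series]) auto
  have "(\<lambda>z. z * deriv f z - f z) has_fps_expansion \<Psi>"
    unfolding \<Psi>_def by (intro fps_expansion_intros F)
  moreover have "(\<lambda>z. z * deriv f z - f z) holomorphic_on ball 0 1"
    by (intro holomorphic_intros holomorphic_deriv hol) auto
  ultimately have "norm (fps_nth \<Psi> k) \<le> C"
    using bound \<open>2 \<le> k\<close> by (intro norm_fps_nth_le_if_norm_le_power) auto
  moreover have "fps_nth \<Psi> k = of_real (real k - 1) * a k"
    using \<open>2 \<le> k\<close> by (cases k) (auto simp: \<Psi>_def algebra_simps)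
  then have "norm (fps_nth \<Psi> k) = (real k - 1) * norm (a k)"
    using \<open>2 \<le> k\<close> by (simp only: norm_mult norm_of_real)
  ultimately show ?thesis
    by simp
qed

lemma norm_power_diff_tangent_le:
  fixes z w :: "'a :: real_normed_field"
  assumes "norm z \<le> \<rho>" "norm w \<le> \<rho>"
  shows "norm (z ^ (m + 2) - w ^ (m + 2) - of_nat (m + 2) * w ^ (m + 1) * (z - w))
           \<le> real ((m + 2) * (m + 1)) / 2 * \<rho> ^ m * norm (z - w) ^ 2"
proof (induction m)
  case 0
  have "z * z - w * w - 2 * w * (z - w) = (z - w) ^ 2"
    by (simp add: power2_eq_square algebra_simps)
  then show ?case
    by (simp add: norm_power)
next
  case (Suc m)
  have "0 \<le> \<rho>"
    using assms(1) norm_ge_zero order_trans by blast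
  have "z ^ (Suc m + 2) - w ^ (Suc m + 2) - of_nat (Suc m + 2) * w ^ (Suc m + 1) * (z - w)
      = z * (z ^ (m + 2) - w ^ (m + 2) - of_nat (m + 2) * w ^ (m + 1) * (z - w))
        + of_nat (m + 2) * w ^ (m + 1) * (z - w) ^ 2"
    by (simp add: power2_eq_square algebra_simps)
  also have "norm \<dots> \<le> norm z * norm (z ^ (m + 2) - w ^ (m + 2) - of_nat (m + 2) * w ^ (m + 1) * (z - w))
      + real (m + 2) * norm w ^ (m + 1) * norm (z - w) ^ 2"
    by (rule order_trans[OF norm_triangle_ineq]) (simp only: norm_mult norm_power norm_of_nat order_refl)
  also have "\<dots> \<le> \<rho> * (real ((m + 2) * (m + 1)) / 2 * \<rho> ^ m * norm (z - w) ^ 2)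
      + real (m + 2) * \<rho> ^ (m + 1) * norm (z - w) ^ 2"
    by (intro add_mono mult_mono Suc.IH assms power_mono mult_left_mono) (auto simp: \<open>0 \<le> \<rho>\<close>)
  also have "\<dots> = real ((Suc m + 2) * (Suc m + 1)) / 2 * \<rho> ^ Suc m * norm (z - w) ^ 2"
    by (simp add: algebra_simps)
  finally show ?case .
qed

lemma Re_diff_divide_le:
  fixes z \<zeta> :: complex
  assumes "norm z \<le> norm \<zeta>" "\<zeta> \<noteq> 0"
  shows "Re ((z - \<zeta>) / \<zeta>) \<le> - ((norm (z - \<zeta>) / norm \<zeta>) ^ 2 / 2)"
proof -
  define u where "u = z / \<zeta>"
  have u: "(z - \<zeta>) / \<zeta> = u - 1"
    using \<open>\<zeta> \<noteq> 0\<close> by (simp add: u_def field_simps)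
  have "norm (z - \<zeta>) / norm \<zeta> = norm (u - 1)"
    by (simp flip: norm_divide add: u)
  moreover have "norm (u - 1) ^ 2 = (Re u - 1) ^ 2 + Im u ^ 2"
    by (simp add: cmod_power2)
  moreover have "Re u ^ 2 + Im u ^ 2 \<le> 1"
    using assms by (simp flip: cmod_power2 add: u_def norm_divide divide_le_eq_1 power_le_one)
  ultimately show ?thesis
    unfolding u by (simp add: power2_eq_square algebra_simps)
qed

definition partial_sum_deriv :: "(nat \<Rightarrow> complex) \<Rightarrow> nat \<Rightarrow> complex \<Rightarrow> complex" where
  "partial_sum_deriv a n z = 1 + (\<Sum>k=2..n. of_nat k * a k * z ^ (k - 1))"

lemma norm_partial_sum_deriv_ge:
  assumes "norm \<zeta> \<le> \<rho>"
  shows "1 - (\<Sum>k=2..n. real k * norm (a k) * \<rho> ^ (k - 1)) \<le> norm (partial_sum_deriv a n \<zeta>)"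
proof -
  have "norm (partial_sum_deriv a n \<zeta> - 1) \<le> (\<Sum>k=2..n. real k * norm (a k) * \<rho> ^ (k - 1))"
    unfolding partial_sum_deriv_def using assms
    by (auto intro!: order_trans[OF norm_sum] sum_mono mult_left_mono power_mono
        simp: norm_mult norm_power)
  then show ?thesis
    using norm_triangle_ineq2[of 1 "partial_sum_deriv a n \<zeta>"] by (simp add: norm_minus_commute)
qed

lemma norm_partial_sum_remainder_le:
  assumes "norm z \<le> \<rho>" "norm \<zeta> \<le> \<rho>"
  shows "norm (partial_sum a n z - partial_sum a n \<zeta> - partial_sum_deriv a n \<zeta> * (z - \<zeta>))
           \<le> (\<Sum>k=2..n. real (k * (k - 1)) / 2 * norm (a k) * \<rho> ^ (k - 2)) * norm (z - \<zeta>) ^ 2"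
proof -
  have "partial_sum a n z - partial_sum a n \<zeta> - partial_sum_deriv a n \<zeta> * (z - \<zeta>)
      = (\<Sum>k=2..n. a k * (z ^ k - \<zeta> ^ k - of_nat k * \<zeta> ^ (k - 1) * (z - \<zeta>)))"
    unfolding partial_sum_def partial_sum_deriv_def
    by (simp add: algebra_simps sum_subtractf sum_distrib_left sum_distrib_right sum.distrib)
  also have "norm \<dots> \<le> (\<Sum>k=2..n. norm (a k) * (real (k * (k - 1)) / 2 * \<rho> ^ (k - 2) * norm (z - \<zeta>) ^ 2))"
  proof (rule order_trans[OF norm_sum], rule sum_mono)
    fix k assume "k \<in> {2..n}"
    then obtain m where k: "k = m + 2"
      by (metis add.commute atLeastAtMost_iff le_Suc_ex)
    have "norm (z ^ k - \<zeta> ^ k - of_nat k * \<zeta> ^ (k - 1) * (z - \<zeta>))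
        \<le> real (k * (k - 1)) / 2 * \<rho> ^ (k - 2) * norm (z - \<zeta>) ^ 2"
      using norm_power_diff_tangent_le[OF assms, of m] by (simp add: k mult_ac)
    then show "norm (a k * (z ^ k - \<zeta> ^ k - of_nat k * \<zeta> ^ (k - 1) * (z - \<zeta>)))
        \<le> norm (a k) * (real (k * (k - 1)) / 2 * \<rho> ^ (k - 2) * norm (z - \<zeta>) ^ 2)"
      unfolding norm_mult by (rule mult_left_mono) simp
  qed
  also have "\<dots> = (\<Sum>k=2..n. real (k * (k - 1)) / 2 * norm (a k) * \<rho> ^ (k - 2)) * norm (z - \<zeta>) ^ 2"
    unfolding sum_distrib_right by (rule sum.cong) simp_all
  finally show ?thesis .
qed

lemma sum_sq_norm_coeff_split:
  fixes a :: "nat \<Rightarrow> complex" and \<rho> :: real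
  shows "(\<Sum>k=2..n. real k * norm (a k) * \<rho> ^ (k - 1))
      + 2 * \<rho> * (\<Sum>k=2..n. real (k * (k - 1)) / 2 * norm (a k) * \<rho> ^ (k - 2))
    = (\<Sum>k=2..n. real k ^ 2 * norm (a k) * \<rho> ^ (k - 1))"
  unfolding sum_distrib_left sum.distrib[symmetric]
proof (rule sum.cong)
  fix k assume "k \<in> {2..n}"
  then obtain m where k: "k = m + 2"
    by (metis add.commute atLeastAtMost_iff le_Suc_ex)
  show "real k * norm (a k) * \<rho> ^ (k - 1) + 2 * \<rho> * (real (k * (k - 1)) / 2 * norm (a k) * \<rho> ^ (k - 2))
      = real k ^ 2 * norm (a k) * \<rho> ^ (k - 1)"
    by (simp add: k power2_eq_square algebra_simps)
qed simp

lemma norm_partial_sum_remainder_lt: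
  assumes \<zeta>: "norm \<zeta> = \<rho>" and z: "norm z \<le> \<rho>" "z \<noteq> \<zeta>"
    and small: "(\<Sum>k=2..n. real k ^ 2 * norm (a k) * \<rho> ^ (k - 1)) < 1"
  shows "norm (partial_sum a n z - partial_sum a n \<zeta> - partial_sum_deriv a n \<zeta> * (z - \<zeta>))
           < (norm (z - \<zeta>) / \<rho>) ^ 2 / 2 * norm (\<zeta> * partial_sum_deriv a n \<zeta>)"
proof -
  define A where "A = (\<Sum>k=2..n. real k * norm (a k) * \<rho> ^ (k - 1))"
  define B where "B = (\<Sum>k=2..n. real (k * (k - 1)) / 2 * norm (a k) * \<rho> ^ (k - 2))"
  define d where "d = norm (z - \<zeta>)"
  have "0 < \<rho>"
    using \<zeta> z by (cases "0 < \<rho>") auto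
  have "0 < d"
    using z by (simp add: d_def)
  have "0 \<le> B"
    unfolding B_def using \<open>0 < \<rho>\<close> by (intro sum_nonneg) auto
  have "A + 2 * \<rho> * B < 1"
    using small sum_sq_norm_coeff_split[of a \<rho> n] by (simp add: A_def B_def)
  have "norm (partial_sum a n z - partial_sum a n \<zeta> - partial_sum_deriv a n \<zeta> * (z - \<zeta>)) \<le> B * d ^ 2"
    unfolding B_def d_def by (rule norm_partial_sum_remainder_le[OF z(1) eq_refl[OF \<zeta>]])
  also have "\<dots> < (d / \<rho>) ^ 2 / 2 * (\<rho> * (1 - A))"
  proof -
    have "2 * \<rho> * B * d ^ 2 < (1 - A) * d ^ 2"
      using \<open>A + 2 * \<rho> * B < 1\<close> \<open>0 < d\<close> by (intro mult_strict_right_mono) auto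
    then have "2 * \<rho> * B * d ^ 2 / (2 * \<rho>) < (1 - A) * d ^ 2 / (2 * \<rho>)"
      using \<open>0 < \<rho>\<close> by (intro divide_strict_right_mono) auto
    moreover have "(d / \<rho>) ^ 2 / 2 * (\<rho> * (1 - A)) = (1 - A) * d ^ 2 / (2 * \<rho>)"
      using \<open>0 < \<rho>\<close> by (simp add: power2_eq_square field_simps)
    ultimately show ?thesis
      using \<open>0 < \<rho>\<close> by simp
  qed
  also have "\<dots> \<le> (d / \<rho>) ^ 2 / 2 * norm (\<zeta> * partial_sum_deriv a n \<zeta>)"
    unfolding norm_mult \<zeta> A_def using \<open>0 < \<rho>\<close>
    by (intro mult_left_mono norm_partial_sum_deriv_ge) (auto simp: \<zeta>)
  finally show ?thesis
    by (simp add: d_def)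
qed

lemma partial_sum_strict_support:
  assumes \<zeta>: "norm \<zeta> = \<rho>" and z: "norm z \<le> \<rho>" "z \<noteq> \<zeta>"
    and small: "(\<Sum>k=2..n. real k ^ 2 * norm (a k) * \<rho> ^ (k - 1)) < 1"
  shows "Re ((partial_sum a n z - partial_sum a n \<zeta>) / (\<zeta> * partial_sum_deriv a n \<zeta>)) < 0"
proof -
  define c where "c = \<zeta> * partial_sum_deriv a n \<zeta>"
  define E where "E = partial_sum a n z - partial_sum a n \<zeta> - partial_sum_deriv a n \<zeta> * (z - \<zeta>)"
  have E: "norm E < (norm (z - \<zeta>) / \<rho>) ^ 2 / 2 * norm c"
    unfolding E_def c_def by (rule norm_partial_sum_remainder_lt[OF assms])
  then have "c \<noteq> 0"
    by auto
  then have "\<zeta> \<noteq> 0"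
    by (simp add: c_def)
  have "(partial_sum a n z - partial_sum a n \<zeta>) / c = (z - \<zeta>) / \<zeta> + E / c"
    unfolding E_def using \<open>c \<noteq> 0\<close> \<open>\<zeta> \<noteq> 0\<close> by (simp add: c_def field_simps)
  then have "Re ((partial_sum a n z - partial_sum a n \<zeta>) / c) = Re ((z - \<zeta>) / \<zeta>) + Re (E / c)"
    by simp
  moreover have "Re ((z - \<zeta>) / \<zeta>) \<le> - ((norm (z - \<zeta>) / \<rho>) ^ 2 / 2)"
    using Re_diff_divide_le[of z \<zeta>] z \<zeta> \<open>\<zeta> \<noteq> 0\<close> by simp
  moreover have "Re (E / c) \<le> norm E / norm c"
    using complex_Re_le_cmod[of "E / c"] by (simp add: norm_divide)
  moreover have "norm E / norm c < (norm (z - \<zeta>) / \<rho>) ^ 2 / 2"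
    using E \<open>c \<noteq> 0\<close> by (simp add: divide_less_eq)
  ultimately show ?thesis
    unfolding c_def[symmetric] by linarith
qed

lemma sums_one_if_rK_equation:
  fixes r :: real
  assumes r: "0 < r" "r < 1" and eqn: "(1 - r)^2 * ln (1 - r) + 2 - 7 * r + 4 * r^2 = 0"
  shows "(\<lambda>j. real (j + 2) ^ 2 / (2 * real (j + 1)) * r ^ (j + 1)) sums 1"
proof -
  have "norm r < 1"
    using r by simp
  have "(\<lambda>n. - (r ^ n) / real n) sums ln (1 - r)"
    using ln_series'[of "-r"] r by simp
  then have log: "(\<lambda>j. - (r ^ Suc j) / real (Suc j)) sums ln (1 - r)"
    using sums_Suc_iff[of "\<lambda>n. - (r ^ n) / real n"] by simp
  have "(\<lambda>j. (r * (real (Suc j) * r ^ j) + 2 * (r * r ^ j) - (- (r ^ Suc j) / real (Suc j))) / 2)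
      sums ((r * (1 / (1 - r) ^ 2) + 2 * (r * (1 / (1 - r))) - ln (1 - r)) / 2)"
    by (intro sums_divide sums_diff sums_add sums_mult log
        geometric_deriv_sums geometric_sums \<open>norm r < 1\<close>)
  moreover have "(r * (1 / (1 - r) ^ 2) + 2 * (r * (1 / (1 - r))) - ln (1 - r)) / 2 = 1"
  proof -
    define q where "q = 1 - r"
    have "0 < q"
      using r by (simp add: q_def)
    have "(r * (1 / q ^ 2) + 2 * (r * (1 / q)) - ln q) * q ^ 2 = r + 2 * r * q - q ^ 2 * ln q"
      using \<open>0 < q\<close> by (simp add: field_simps power2_eq_square)
    also have "\<dots> = 2 * q ^ 2"
      using eqn by (simp add: q_def power2_eq_square algebra_simps)
    finally show ?thesis
      using \<open>0 < q\<close> by (simp add: q_def)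
  qed
  moreover have "(\<lambda>j. (r * (real (Suc j) * r ^ j) + 2 * (r * r ^ j) - (- (r ^ Suc j) / real (Suc j))) / 2)
      = (\<lambda>j. real (j + 2) ^ 2 / (2 * real (j + 1)) * r ^ (j + 1))"
    by (rule ext) (simp add: field_simps power2_eq_square)
  ultimately show ?thesis
    by simp
qed

lemma sum_sq_norm_coeff_lt_one:
  fixes a :: "nat \<Rightarrow> complex"
  assumes coeff: "\<And>k. 2 \<le> k \<Longrightarrow> (real k - 1) * norm (a k) \<le> 1 / 2"
    and \<rho>: "0 \<le> \<rho>" "\<rho> \<le> r" and r: "0 < r" "r < 1"
    and eqn: "(1 - r)^2 * ln (1 - r) + 2 - 7 * r + 4 * r^2 = 0"
  shows "(\<Sum>k=2..n. real k ^ 2 * norm (a k) * \<rho> ^ (k - 1)) < 1"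
proof -
  define w where "w j = real (j + 2) ^ 2 / (2 * real (j + 1)) * r ^ (j + 1)" for j
  have w_sums: "w sums 1"
    unfolding w_def[abs_def] by (rule sums_one_if_rK_equation[OF r eqn])
  have "(\<Sum>k=2..n. real k ^ 2 * norm (a k) * \<rho> ^ (k - 1)) \<le> (\<Sum>k=2..n. w (k - 2))"
  proof (rule sum_mono)
    fix k assume "k \<in> {2..n}"
    then obtain m where k: "k = m + 2"
      by (metis add.commute atLeastAtMost_iff le_Suc_ex)
    have "norm (a k) \<le> 1 / (2 * real (m + 1))"
      using coeff[of k] by (simp add: k field_simps)
    moreover have "\<rho> ^ (m + 1) \<le> r ^ (m + 1)"
      using \<rho> by (intro power_mono) auto
    ultimately have "real k ^ 2 * norm (a k) * \<rho> ^ (m + 1) \<le> real k ^ 2 * (1 / (2 * real (m + 1))) * r ^ (m + 1)"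
      using \<rho> by (intro mult_mono mult_left_mono) auto
    then show "real k ^ 2 * norm (a k) * \<rho> ^ (k - 1) \<le> w (k - 2)"
      by (simp add: w_def k)
  qed
  also have "\<dots> = sum w {..<n - 1}"
    by (rule sum.reindex_bij_witness[of _ "\<lambda>j. j + 2" "\<lambda>k. k - 2"]) auto
  also have "\<dots> < suminf w"
    by (rule sum_less_suminf[OF sums_summable[OF w_sums]]) (use r in \<open>simp add: w_def\<close>)
  also have "suminf w = 1"
    using w_sums by (rule sums_unique[symmetric])
  finally show ?thesis .
qed

lemma inj_on_if_strict_support:
  fixes g c :: "complex \<Rightarrow> complex"
  assumes support: "\<And>\<zeta> z. \<zeta> \<in> S \<Longrightarrow> z \<in> S \<Longrightarrow> norm z \<le> norm \<zeta> \<Longrightarrow> z \<noteq> \<zeta>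
      \<Longrightarrow> Re ((g z - g \<zeta>) / c \<zeta>) < 0"
  shows "inj_on g S"
proof (rule inj_onI, rule ccontr)
  fix x y assume "x \<in> S" "y \<in> S" "g x = g y" "x \<noteq> y"
  then show False
    using support[of x y] support[of y x] by (cases "norm y \<le> norm x") auto
qed

lemma convex_image_ball_if_strict_support:
  fixes g c :: "complex \<Rightarrow> complex"
  assumes hol: "g holomorphic_on ball 0 \<rho>" and cont: "continuous_on (cball 0 \<rho>) g"
    and inj: "inj_on g (ball 0 \<rho>)"
    and support: "\<And>\<zeta> z. norm \<zeta> = \<rho> \<Longrightarrow> norm z < \<rho> \<Longrightarrow> Re ((g z - g \<zeta>) / c \<zeta>) < 0"
  shows "convex (g ` ball 0 \<rho>)"
proof -
  define U where "U = g ` ball 0 \<rho>"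
  have "open U"
    unfolding U_def by (rule open_mapping_thm3[OF hol]) (auto simp: inj)
  have closure_U: "closure U \<subseteq> g ` cball 0 \<rho>"
    unfolding U_def
    by (intro closure_minimal image_mono compact_imp_closed compact_continuous_image cont) auto
  have "closed_segment p q \<subseteq> U" if "p \<in> U" "q \<in> U" for p q
  proof (rule ccontr)
    assume "\<not> closed_segment p q \<subseteq> U"
    then have "closed_segment p q \<inter> frontier U \<noteq> {}"
      using \<open>p \<in> U\<close> by (intro connected_Int_frontier) auto
    then obtain w where w: "w \<in> closed_segment p q" "w \<in> closure U" "w \<notin> U"
      using \<open>open U\<close> by (auto simp: frontier_def interior_open)
    then obtain \<zeta> where "norm \<zeta> = \<rho>" "w = g \<zeta>"
      using closure_U unfolding U_def by force
    define H where "H = {v. Re ((v - g \<zeta>) / c \<zeta>) < 0}"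
    have "H = (\<lambda>v. v / c \<zeta>) -` {x. Re x < Re (g \<zeta> / c \<zeta>)}"
      by (auto simp: H_def diff_divide_distrib)
    then have "convex H"
      using convex_linear_vimage[OF bounded_linear.linear[OF bounded_linear_divide]
          convex_halfspace_Re_lt] by simp
    moreover have "p \<in> H" "q \<in> H"
      using that support \<open>norm \<zeta> = \<rho>\<close> unfolding U_def H_def by auto
    ultimately have "w \<in> H"
      using w(1) convex_contains_segment by blast
    then show False
      using \<open>w = g \<zeta>\<close> by (simp add: H_def)
  qed
  then show ?thesis
    unfolding convex_contains_segment U_def by blast
qed

lemma convex_in_disk_if_strict_support:
  fixes g c :: "complex \<Rightarrow> complex"
  assumes hol: "g holomorphic_on ball 0 R"
    and support: "\<And>\<zeta> z. \<zeta> \<in> ball 0 R \<Longrightarrow> norm z \<le> norm \<zeta> \<Longrightarrow> z \<noteq> \<zeta>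
      \<Longrightarrow> Re ((g z - g \<zeta>) / c \<zeta>) < 0"
  shows "convex_in_disk g R"
proof -
  have inj: "inj_on g (ball 0 R)"
    by (rule inj_on_if_strict_support[where c = c]) (auto intro: support)
  have "closed_segment p q \<subseteq> g ` ball 0 R" if image: "p \<in> g ` ball 0 R" "q \<in> g ` ball 0 R" for p q
  proof -
    obtain z1 z2 where z: "z1 \<in> ball 0 R" "z2 \<in> ball 0 R" and pq: "p = g z1" "q = g z2"
      using image by blast
    then obtain \<rho> where \<rho>: "max (norm z1) (norm z2) < \<rho>" "\<rho> < R"
      using dense[of "max (norm z1) (norm z2)" R] by auto
    have sub: "cball 0 \<rho> \<subseteq> ball 0 R"
      using \<rho>(2) by auto
    have "convex (g ` ball 0 \<rho>)"
    proof (rule convex_image_ball_if_strict_support)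
      show "g holomorphic_on ball 0 \<rho>"
        using hol by (rule holomorphic_on_subset) (use sub in auto)
      show "continuous_on (cball 0 \<rho>) g"
        using holomorphic_on_imp_continuous_on[OF holomorphic_on_subset[OF hol sub]] .
      show "inj_on g (ball 0 \<rho>)"
        using inj by (rule inj_on_subset) (use sub in auto)
      show "Re ((g z - g \<zeta>) / c \<zeta>) < 0" if "norm \<zeta> = \<rho>" "norm z < \<rho>" for \<zeta> z
        using support[of \<zeta> z] that \<rho>(2) by auto
    qed
    moreover have "p \<in> g ` ball 0 \<rho>" "q \<in> g ` ball 0 \<rho>"
      using pq \<rho>(1) by auto
    ultimately have "closed_segment p q \<subseteq> g ` ball 0 \<rho>"
      unfolding convex_contains_segment by blast
    also have "\<dots> \<subseteq> g ` ball 0 R"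
      using \<rho>(2) by (intro image_mono) auto
    finally show ?thesis .
  qed
  then have "convex (g ` ball 0 R)"
    unfolding convex_contains_segment by blast
  with hol inj show ?thesis
    unfolding convex_in_disk_def by blast
qed

theorem theorem2p1:
  fixes f \<phi> :: "complex \<Rightarrow> complex" and a :: "nat \<Rightarrow> complex" and rK :: real
  assumes f_series: "\<And>z. z \<in> ball 0 1 \<Longrightarrow> (\<lambda>k. a k * z ^ k) sums f z"
    and a0: "a 0 = 0" and a1: "a 1 = 1"
    and f_hol: "f holomorphic_on ball 0 1"
    and phi_hol: "\<phi> holomorphic_on ball 0 1"
    and phi_bd: "\<And>z. z \<in> ball 0 1 \<Longrightarrow> norm (\<phi> z) \<le> 1"
    and eq: "\<And>z. z \<in> ball 0 1 \<Longrightarrow> z * deriv f z - f z = 1/2 * z^2 * \<phi> z"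
    and rK: "0 < rK" "rK < 1" "(1 - rK)^2 * ln (1 - rK) + 2 - 7 * rK + 4 * rK^2 = 0"
    and n: "n \<ge> 2"
  shows "convex_in_disk (partial_sum a n) rK"
proof (rule convex_in_disk_if_strict_support)
  have "norm (z * deriv f z - f z) \<le> 1/2 * norm z ^ 2" if "z \<in> ball 0 1" for z
    unfolding eq[OF that] norm_mult norm_power using phi_bd[OF that] by (simp add: mult_left_le)
  then have coeff: "(real k - 1) * norm (a k) \<le> 1/2" if "2 \<le> k" for k
    using coeff_bound_if_norm_z_deriv_minus_le[OF f_series f_hol _ that] by blast
  fix \<zeta> z :: complex assume "\<zeta> \<in> ball 0 rK" "norm z \<le> norm \<zeta>" "z \<noteq> \<zeta>"
  then show "Re ((partial_sum a n z - partial_sum a n \<zeta>) / (\<zeta> * partial_sum_deriv a n \<zeta>)) < 0"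
    by (intro partial_sum_strict_support refl sum_sq_norm_coeff_lt_one[OF coeff _ _ rK]) auto
next
  show "partial_sum a n holomorphic_on ball 0 rK"
    unfolding partial_sum_def by (intro holomorphic_intros)
qed

end
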